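(* Let $G$ be a finite simple graph. Then the independence attractor $\mathcal{A}(G)$ of $G$ is not a circle.
   Context: For a finite simple graph $G$, an independent set is a set of pairwise non-adjacent vertices. The independence polynomial is $I_G(z)=\sum_{i=0}^{\alpha} a_i z^i$, where $a_i$ is the number of independent sets of cardinality $i$ (so $a_0=1$) and $\alpha$ (the independence number) is the largest cardinality of an independent set. The lexicographic product $G[H]$ has vertex set $V(G)\times V(H)$, with $(u,v)\sim(u',v')$ iff $u\sim u'$ in $G$, or $u=u'$ and $v\sim v'$ in $H$. Let $G^1=G$ and $G^{m}=G[G^{m-1}]$ denote the $m$-fold lexicographic product of $G$ with itself. The independence attractor is $\mathcal{A}(G)=\lim_{m\to\infty}\{z\in\mathbb{C}: I_{G^m}(z)=0\}$, the limit taken in the Hausdorff metric on nonempty compact subsets of $\mathbb{C}$. (Equivalently, with $P_G=I_G-1$, $\mathcal{A}(G)=\lim_{m\to\infty}\{z: P_G^m(z)=-1\}$, where $P_G^m$ is the $m$-th iterate.) *)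

theory Defs
  imports "HOL-Analysis.Analysis"
begin

definition finite_simple_graph :: "'a set \<Rightarrow> ('a \<Rightarrow> 'a \<Rightarrow> bool) \<Rightarrow> bool" where
  "finite_simple_graph V E \<longleftrightarrow> finite V \<and> (\<forall>x y. E x y \<longrightarrow> x \<in> V \<and> y \<in> V)
     \<and> (\<forall>x y. E x y \<longrightarrow> E y x) \<and> (\<forall>x. \<not> E x x)"

definition independent_set :: "('a \<Rightarrow> 'a \<Rightarrow> bool) \<Rightarrow> 'a set \<Rightarrow> bool" where
  "independent_set E S \<longleftrightarrow> (\<forall>x\<in>S. \<forall>y\<in>S. \<not> E x y)"

definition indep_poly :: "'a set \<Rightarrow> ('a \<Rightarrow> 'a \<Rightarrow> bool) \<Rightarrow> complex \<Rightarrow> complex" where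
  "indep_poly V E z = (\<Sum>S\<in>{S. S \<subseteq> V \<and> independent_set E S}. z ^ card S)"

text \<open>m-fold lexicographic power G^m: vertices are lists of length m over V
  (the list u # w represents the pair (u,w) of G[G^(m-1)]); two such lists are
  adjacent iff at the first position where they differ, the entries are adjacent
  in G.  This unfolds exactly G^1 = G and G^m = G[G^(m-1)].\<close>
definition lex_power_vertices :: "'a set \<Rightarrow> nat \<Rightarrow> 'a list set" where
  "lex_power_vertices V m = {xs. length xs = m \<and> set xs \<subseteq> V}"

definition lex_power_adj :: "('a \<Rightarrow> 'a \<Rightarrow> bool) \<Rightarrow> 'a list \<Rightarrow> 'a list \<Rightarrow> bool" where
  "lex_power_adj E xs ys \<longleftrightarrow> length xs = length ys \<and>
     (\<exists>i < length xs. take i xs = take i ys \<and> E (xs ! i) (ys ! i))"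

definition lex_power_zeros :: "'a set \<Rightarrow> ('a \<Rightarrow> 'a \<Rightarrow> bool) \<Rightarrow> nat \<Rightarrow> complex set" where
  "lex_power_zeros V E m =
     {z. indep_poly (lex_power_vertices V m) (lex_power_adj E) z = 0}"

definition hausdorff_dist :: "complex set \<Rightarrow> complex set \<Rightarrow> real" where
  "hausdorff_dist S T = max (SUP x\<in>S. infdist x T) (SUP y\<in>T. infdist y S)"

definition hausdorff_converges :: "(nat \<Rightarrow> complex set) \<Rightarrow> complex set \<Rightarrow> bool" where
  "hausdorff_converges Z A \<longleftrightarrow> A \<noteq> {} \<and> compact A \<and>
     (\<forall>\<^sub>F m in sequentially. Z m \<noteq> {} \<and> compact (Z m)) \<and>
     ((\<lambda>m. hausdorff_dist (Z m) A) \<longlonglongrightarrow> 0)"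

definition is_circle :: "complex set \<Rightarrow> bool" where
  "is_circle A \<longleftrightarrow> (\<exists>c r. r > 0 \<and> A = sphere c r)"

end

theory Submission
  imports Defs "HOL-Computational_Algebra.Fundamental_Theorem_Algebra"
begin

text \<open>Write \<open>P\<^sub>G = I\<^sub>G - 1\<close>. Independent sets of \<open>G[H]\<close> are independent sets \<open>T\<close> of \<open>G\<close>
  with a nonempty independent set of \<open>H\<close> chosen over each vertex of \<open>T\<close>, whence
  \<open>I\<^bsub>G[H]\<^esub> = I\<^sub>G \<circ> P\<^sub>H\<close>; so the zero sets \<open>Z\<^sub>m\<close> of \<open>I\<^bsub>G\<^sup>m\<^esub>\<close> are the preimages of \<open>-1\<close>
  under the iterates of \<open>P\<^sub>G\<close>, and \<open>P\<^sub>G\<close> maps \<open>Z\<^bsub>m+1\<^esub>\<close> into \<open>Z\<^sub>m\<close>. Consequently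
  any Hausdorff limit \<open>A\<close> satisfies \<open>P\<^sub>G(A) \<subseteq> A\<close>.

  A polynomial mapping the circle \<open>|z - c| = r\<close> into itself has the form
  \<open>c + \<mu>(z - c)\<^sup>k\<close>. If \<open>G\<close> has an edge, \<open>P\<^sub>G\<close> has \<open>P\<^sub>G(0) = 0\<close>, \<open>P\<^sub>G'(0) = |V| \<ge> 2\<close> and
  degree \<open>\<alpha>(G) < |V|\<close>, which is incompatible with that form. If \<open>G\<close> has no edge,
  \<open>P\<^sub>G(z) = (z + 1)\<^bsup>|V|\<^esup> - 1\<close> takes the value \<open>-1\<close> only at \<open>-1\<close>, so every \<open>Z\<^sub>m\<close>, and
  hence \<open>A\<close>, lies in \<open>{-1}\<close>.\<close>

section \<open>Independence polynomials of lexicographic products\<close>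

definition indep_sets :: "'a set \<Rightarrow> ('a \<Rightarrow> 'a \<Rightarrow> bool) \<Rightarrow> 'a set set" where
  "indep_sets V E = {S. S \<subseteq> V \<and> independent_set E S}"

definition nonempty_indep_poly :: "'a set \<Rightarrow> ('a \<Rightarrow> 'a \<Rightarrow> bool) \<Rightarrow> complex poly" where
  "nonempty_indep_poly V E = (\<Sum>S\<in>indep_sets V E - {{}}. monom 1 (card S))"

definition lex_prod_adj ::
    "('a \<Rightarrow> 'a \<Rightarrow> bool) \<Rightarrow> ('b \<Rightarrow> 'b \<Rightarrow> bool) \<Rightarrow> 'a \<times> 'b \<Rightarrow> 'a \<times> 'b \<Rightarrow> bool" where
  "lex_prod_adj E F p q \<longleftrightarrow> E (fst p) (fst q) \<or> (fst p = fst q \<and> F (snd p) (snd q))"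

lemma finite_indep_sets: "finite V \<Longrightarrow> finite (indep_sets V E)"
  unfolding indep_sets_def by (rule finite_subset[of _ "Pow V"]) auto

lemma empty_in_indep_sets: "{} \<in> indep_sets V E"
  unfolding indep_sets_def independent_set_def by simp

lemma indep_poly_altdef: "indep_poly V E z = (\<Sum>S\<in>indep_sets V E. z ^ card S)"
  unfolding indep_poly_def indep_sets_def ..

lemma indep_poly_eq_1_plus:
  assumes "finite V"
  shows "indep_poly V E z = 1 + poly (nonempty_indep_poly V E) z"
  using sum.remove[OF finite_indep_sets[OF assms] empty_in_indep_sets, of "\<lambda>S. z ^ card S"]
  by (simp add: indep_poly_altdef nonempty_indep_poly_def poly_sum poly_monom)

lemma Sigma_in_indep_sets_lex_prod:
  assumes "T \<in> indep_sets V E" and "\<And>x. x \<in> T \<Longrightarrow> f x \<in> indep_sets W F"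
  shows "Sigma T f \<in> indep_sets (V \<times> W) (lex_prod_adj E F)"
  using assms unfolding indep_sets_def independent_set_def lex_prod_adj_def by auto

lemma indep_sets_lex_prod_fibres:
  assumes "S \<in> indep_sets (V \<times> W) (lex_prod_adj E F)"
  shows "fst ` S \<in> indep_sets V E" and "{w. (x, w) \<in> S} \<in> indep_sets W F"
  using assms unfolding indep_sets_def independent_set_def lex_prod_adj_def
  by auto (metis fst_conv snd_conv)

lemma bij_betw_indep_sets_lex_prod:
  fixes V :: "'a set" and W :: "'b set"
  shows "bij_betw (\<lambda>(T, f). Sigma T f)
     (SIGMA T:indep_sets V E. PiE T (\<lambda>_. indep_sets W F - {{}}))
     (indep_sets (V \<times> W) (lex_prod_adj E F))"
    (is "bij_betw _ ?Sig ?I")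
proof -
  define fibres :: "('a \<times> 'b) set \<Rightarrow> 'a set \<times> ('a \<Rightarrow> 'b set)"
    where "fibres S = (fst ` S, \<lambda>x\<in>fst ` S. {w. (x, w) \<in> S})" for S
  have "fibres (Sigma T f) = (T, f)" if "(T, f) \<in> ?Sig" for T f
  proof -
    from that have f: "f \<in> PiE T (\<lambda>_. indep_sets W F - {{}})" by simp
    then have "fst ` Sigma T f = T" by force
    with f show ?thesis unfolding fibres_def by (auto simp: PiE_def extensional_def fun_eq_iff)
  qed
  then have "\<forall>a\<in>?Sig. fibres (case a of (T, f) \<Rightarrow> Sigma T f) = a" by auto
  moreover have "(case fibres S of (T, f) \<Rightarrow> Sigma T f) = S" for S
    unfolding fibres_def by (force simp: restrict_def split: if_splits)
  moreover have "fibres ` ?I \<subseteq> ?Sig"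
  proof (rule image_subsetI)
    fix S assume "S \<in> ?I"
    have "{w. (x, w) \<in> S} \<in> indep_sets W F - {{}}" if "x \<in> fst ` S" for x
      using indep_sets_lex_prod_fibres(2)[OF \<open>S \<in> ?I\<close>] that by force
    with indep_sets_lex_prod_fibres(1)[OF \<open>S \<in> ?I\<close>] show "fibres S \<in> ?Sig"
      unfolding fibres_def by (simp add: restrict_PiE_iff)
  qed
  moreover have "(\<lambda>(T, f). Sigma T f) ` ?Sig \<subseteq> ?I"
    by (auto intro!: Sigma_in_indep_sets_lex_prod)
  ultimately show ?thesis
    by (intro bij_betw_byWitness[where f' = fibres]) simp_all
qed

lemma indep_poly_lex_prod:
  assumes "finite V" "finite W"
  shows "indep_poly (V \<times> W) (lex_prod_adj E F) z
       = indep_poly V E (poly (nonempty_indep_poly W F) z)"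
proof -
  define N where "N = indep_sets W F - {{}}"
  have fin: "finite N" "T \<in> indep_sets V E \<Longrightarrow> finite T" "U \<in> N \<Longrightarrow> finite U" for T U
    using assms finite_indep_sets[OF assms(2)] unfolding N_def indep_sets_def
    by (auto dest: finite_subset)
  have "indep_poly V E (poly (nonempty_indep_poly W F) z)
      = (\<Sum>T\<in>indep_sets V E. \<Prod>x\<in>T. \<Sum>U\<in>N. z ^ card U)"
    by (simp add: indep_poly_altdef nonempty_indep_poly_def N_def poly_sum poly_monom)
  also have "\<dots> = (\<Sum>T\<in>indep_sets V E. \<Sum>f\<in>PiE T (\<lambda>_. N). \<Prod>x\<in>T. z ^ card (f x))"
    using fin by (intro sum.cong refl prod_sum_PiE) auto
  also have "\<dots> = (\<Sum>T\<in>indep_sets V E. \<Sum>f\<in>PiE T (\<lambda>_. N). z ^ card (Sigma T f))"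
    using fin by (intro sum.cong refl) (auto simp: power_sum PiE_iff)
  also have "\<dots> = (\<Sum>(T, f)\<in>(SIGMA T:indep_sets V E. PiE T (\<lambda>_. N)). z ^ card (Sigma T f))"
    using fin assms(1) by (intro sum.Sigma) (auto simp: finite_indep_sets finite_PiE)
  also have "\<dots> = (\<Sum>S\<in>indep_sets (V \<times> W) (lex_prod_adj E F). z ^ card S)"
    using sum.reindex_bij_betw[OF bij_betw_indep_sets_lex_prod, of "\<lambda>S. z ^ card S"]
    unfolding N_def by (simp add: case_prod_unfold)
  finally show ?thesis by (simp add: indep_poly_altdef)
qed

lemma indep_poly_image:
  assumes inj: "inj_on f V" and adj: "\<And>x y. x \<in> V \<Longrightarrow> y \<in> V \<Longrightarrow> E' (f x) (f y) \<longleftrightarrow> E x y"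
  shows "indep_poly (f ` V) E' z = indep_poly V E z"
proof -
  have indep_iff: "independent_set E' (f ` S) \<longleftrightarrow> independent_set E S" if "S \<subseteq> V" for S
  proof -
    have "(\<forall>x\<in>S. \<forall>y\<in>S. \<not> E' (f x) (f y)) \<longleftrightarrow> (\<forall>x\<in>S. \<forall>y\<in>S. \<not> E x y)"
      using that adj by (meson subsetD)
    then show ?thesis unfolding independent_set_def by simp
  qed
  have "indep_sets (f ` V) E' = image f ` indep_sets V E"
  proof (intro equalityI subsetI)
    fix S' assume "S' \<in> indep_sets (f ` V) E'"
    then obtain S where "S \<subseteq> V" "S' = f ` S" "independent_set E' (f ` S)"
      unfolding indep_sets_def by (auto simp: subset_image_iff)
    then show "S' \<in> image f ` indep_sets V E"
      unfolding indep_sets_def by (auto simp: indep_iff)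
  next
    fix S' assume "S' \<in> image f ` indep_sets V E"
    then obtain S where "S \<subseteq> V" "S' = f ` S" "independent_set E S"
      unfolding indep_sets_def by auto
    then show "S' \<in> indep_sets (f ` V) E'"
      unfolding indep_sets_def by (auto simp: indep_iff)
  qed
  moreover have "inj_on (image f) (indep_sets V E)"
    using inj_on_image_Pow[OF inj] by (rule inj_on_subset) (auto simp: indep_sets_def)
  moreover have "card (f ` S) = card S" if "S \<in> indep_sets V E" for S
    using that inj by (intro card_image) (auto simp: indep_sets_def intro: inj_on_subset)
  ultimately show ?thesis
    by (simp add: indep_poly_altdef sum.reindex)
qed

section \<open>Lexicographic powers\<close>

lemma lex_power_vertices_0: "lex_power_vertices V 0 = {[]}"
  unfolding lex_power_vertices_def by auto

lemma lex_power_vertices_Suc: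
  "lex_power_vertices V (Suc m) = (\<lambda>(x, w). x # w) ` (V \<times> lex_power_vertices V m)"
  unfolding lex_power_vertices_def by (auto simp: length_Suc_conv)

lemma finite_lex_power_vertices: "finite V \<Longrightarrow> finite (lex_power_vertices V m)"
  unfolding lex_power_vertices_def using finite_lists_length_eq by (simp add: conj_commute)

lemma lex_power_adj_Cons:
  assumes "length xs = length ys"
  shows "lex_power_adj E (x # xs) (y # ys) \<longleftrightarrow> lex_prod_adj E (lex_power_adj E) (x, xs) (y, ys)"
proof
  assume "lex_power_adj E (x # xs) (y # ys)"
  then obtain i where i: "i < Suc (length xs)" "take i (x # xs) = take i (y # ys)"
    "E ((x # xs) ! i) ((y # ys) ! i)" unfolding lex_power_adj_def by auto
  then show "lex_prod_adj E (lex_power_adj E) (x, xs) (y, ys)"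
    using assms unfolding lex_prod_adj_def lex_power_adj_def by (cases i) auto
next
  assume "lex_prod_adj E (lex_power_adj E) (x, xs) (y, ys)"
  then consider "E x y"
    | j where "x = y" "j < length xs" "take j xs = take j ys" "E (xs ! j) (ys ! j)"
    unfolding lex_prod_adj_def lex_power_adj_def by auto
  then show "lex_power_adj E (x # xs) (y # ys)"
  proof cases
    case 1
    with assms show ?thesis unfolding lex_power_adj_def by (intro conjI exI[of _ 0]) auto
  next
    case (2 j)
    with assms show ?thesis unfolding lex_power_adj_def by (intro conjI exI[of _ "Suc j"]) auto
  qed
qed

lemma poly_nonempty_indep_poly_lex_power:
  assumes "finite V"
  shows "poly (nonempty_indep_poly (lex_power_vertices V m) (lex_power_adj E))
       = poly (nonempty_indep_poly V E) ^^ m"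
proof (induction m)
  case 0
  have "indep_sets {[]} (lex_power_adj E) = {{}, {[]}}"
    unfolding indep_sets_def independent_set_def lex_power_adj_def by auto
  then show ?case
    by (simp add: lex_power_vertices_0 nonempty_indep_poly_def poly_monom fun_eq_iff)
next
  case (Suc m)
  let ?W = "lex_power_vertices V m"
  have "1 + poly (nonempty_indep_poly (lex_power_vertices V (Suc m)) (lex_power_adj E)) z
      = 1 + poly (nonempty_indep_poly V E) (poly (nonempty_indep_poly ?W (lex_power_adj E)) z)"
    for z
  proof -
    have "inj_on (\<lambda>(x, w). x # w) (V \<times> ?W)" by (auto simp: inj_on_def)
    then have "indep_poly (lex_power_vertices V (Suc m)) (lex_power_adj E) z
        = indep_poly (V \<times> ?W) (lex_prod_adj E (lex_power_adj E)) z"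
      unfolding lex_power_vertices_Suc
      by (rule indep_poly_image) (auto simp: lex_power_adj_Cons lex_power_vertices_def)
    then show ?thesis
      using assms finite_lex_power_vertices[OF assms]
      by (simp add: indep_poly_lex_prod indep_poly_eq_1_plus[symmetric])
  qed
  then show ?case using Suc.IH by (simp add: fun_eq_iff)
qed

lemma lex_power_zeros_eq:
  assumes "finite V"
  shows "lex_power_zeros V E m = {z. (poly (nonempty_indep_poly V E) ^^ m) z = -1}"
  using indep_poly_eq_1_plus[OF finite_lex_power_vertices[OF assms]]
  unfolding lex_power_zeros_def
  by (auto simp: poly_nonempty_indep_poly_lex_power[OF assms] add_eq_0_iff)

lemma poly_nonempty_indep_poly_mem_lex_power_zeros:
  assumes "finite V" and "z \<in> lex_power_zeros V E (Suc m)"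
  shows "poly (nonempty_indep_poly V E) z \<in> lex_power_zeros V E m"
  using assms(2) by (simp add: lex_power_zeros_eq[OF assms(1)] funpow_swap1)

lemma coeff_nonempty_indep_poly:
  assumes "finite V"
  shows "coeff (nonempty_indep_poly V E) j
       = of_nat (card {S \<in> indep_sets V E. S \<noteq> {} \<and> card S = j})"
proof -
  have "coeff (nonempty_indep_poly V E) j
      = (\<Sum>S\<in>indep_sets V E - {{}}. if card S = j then 1 else 0)"
    unfolding nonempty_indep_poly_def coeff_sum by (simp add: coeff_monom)
  also have "\<dots> = of_nat (card {S \<in> indep_sets V E - {{}}. card S = j})"
    using finite_indep_sets[OF assms] by (simp add: sum.inter_filter[symmetric])
  also have "{S \<in> indep_sets V E - {{}}. card S = j}
      = {S \<in> indep_sets V E. S \<noteq> {} \<and> card S = j}"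
    by blast
  finally show ?thesis .
qed

lemma coeff_nonempty_indep_poly_0: "finite V \<Longrightarrow> coeff (nonempty_indep_poly V E) 0 = 0"
  by (auto simp: coeff_nonempty_indep_poly indep_sets_def dest: finite_subset)

lemma coeff_nonempty_indep_poly_1:
  assumes "finite V" and "\<And>x. \<not> E x x"
  shows "coeff (nonempty_indep_poly V E) 1 = of_nat (card V)"
proof -
  have "{S \<in> indep_sets V E. S \<noteq> {} \<and> card S = 1} = (\<lambda>x. {x}) ` V"
    using assms unfolding indep_sets_def independent_set_def by (auto simp: card_Suc_eq)
  then show ?thesis
    by (simp add: coeff_nonempty_indep_poly[OF assms(1)] card_image)
qed

lemma coeff_nonempty_indep_poly_eq_0:
  assumes "finite V" and "\<not> independent_set E V" and "card V \<le> j"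
  shows "coeff (nonempty_indep_poly V E) j = 0"
proof -
  have "S = V" if "S \<subseteq> V" "card S = j" for S
    using that assms(1,3) card_mono[of V S] by (metis card_subset_eq finite_subset le_antisym)
  then have none: "{S \<in> indep_sets V E. S \<noteq> {} \<and> card S = j} = {}"
    using assms(2) unfolding indep_sets_def by auto
  show ?thesis unfolding coeff_nonempty_indep_poly[OF assms(1)] none by simp
qed

section \<open>Polynomials mapping a circle into itself\<close>

lemma two_points_on_sphere:
  fixes c :: complex
  assumes "r > 0"
  obtains u v where "u \<in> sphere c r" "v \<in> sphere c r" "u \<noteq> v"
proof
  show "c + of_real r \<in> sphere c r" "c - of_real r \<in> sphere c r"
    using assms by (simp_all add: dist_norm)
  show "c + of_real r \<noteq> c - of_real r"
    using assms by (simp add: complex_eq_iff)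
qed

lemma infinite_sphere_complex:
  fixes c :: complex
  assumes "r > 0"
  shows "infinite (sphere c r)"
proof
  assume "finite (sphere c r)"
  moreover have "connected (sphere c r)" by (rule connected_sphere) simp
  ultimately have "sphere c r = {} \<or> (\<exists>a. sphere c r = {a})"
    by (simp add: connected_finite_iff_sing)
  with two_points_on_sphere[OF assms, of c] show False by (metis empty_iff singletonD)
qed

lemma poly_eq_monom_if_roots_zero:
  fixes p :: "complex poly"
  assumes "p \<noteq> 0" and "\<And>w. poly p w = 0 \<Longrightarrow> w = 0"
  obtains \<mu> k where "\<mu> \<noteq> 0" "p = monom \<mu> k"
proof -
  obtain q where q: "p = [:0, 1:] ^ order 0 p * q" "\<not> [:0, 1:] dvd q"
    using order_decomp[OF assms(1), of 0] by auto
  have "poly q w \<noteq> 0" for w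
  proof (cases "w = 0")
    case True
    with q(2) show ?thesis by (simp add: poly_eq_0_iff_dvd)
  next
    case False
    have "poly p w = w ^ order 0 p * poly q w"
      by (subst q(1)) (simp add: poly_power)
    with False assms(2)[of w] show ?thesis by auto
  qed
  then have "constant (poly q)"
    using fundamental_theorem_of_algebra by blast
  then have "poly q w = poly q 0" for w
    unfolding constant_def by blast
  then have "poly p w = poly (monom (poly q 0) (order 0 p)) w" for w
    by (subst q(1)) (simp add: poly_power poly_monom mult.commute)
  then have "p = monom (poly q 0) (order 0 p)"
    by (rule poly_ext)
  with assms(1) show thesis by (intro that) auto
qed

lemma poly_eq_if_eq_on_infinite:
  fixes p q :: "'a :: idom poly"
  assumes "infinite S" and "\<And>w. w \<in> S \<Longrightarrow> poly p w = poly q w"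
  shows "p = q"
proof (rule ccontr)
  assume "p \<noteq> q"
  then have "finite {w. poly (p - q) w = 0}"
    by (intro poly_roots_finite) simp
  moreover have "S \<subseteq> {w. poly (p - q) w = 0}"
    using assms(2) by auto
  ultimately show False
    using assms(1) finite_subset by blast
qed

lemma poly_sphere_invariant_eq:
  fixes p :: "complex poly"
  assumes r: "r > 0" and inv: "poly p ` sphere c r \<subseteq> sphere c r"
  obtains \<mu> k where "\<mu> \<noteq> 0" "p = [:c:] + smult \<mu> ([:-c, 1:] ^ k)"
proof -
  define F where "F = pcompose p [:c, 1:] - [:c:]"
  define H where "H = pcompose (map_poly cnj p) [:cnj c, of_real (r\<^sup>2):] - [:cnj c:]"
  have poly_F: "poly F w = poly p (c + w) - c" for w
    unfolding F_def by (simp add: poly_pcompose)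
  text \<open>On \<open>|w| = r\<close> we have \<open>cnj (F w) = H (1/w)\<close> and \<open>|F w| = r\<close>, so \<open>F\<close> times the
    reflection of \<open>H\<close> is a monomial, and \<open>F\<close> can vanish only at \<open>0\<close>.\<close>
  have F_reflect_H: "poly (F * reflect_poly H) w = of_real (r\<^sup>2) * w ^ degree H"
    if w: "w \<in> sphere 0 r" for w
  proof -
    have "w \<noteq> 0" using w r by auto
    have "w * cnj w = of_real (r\<^sup>2)" using w by (simp add: complex_norm_square[symmetric])
    then have "of_real (r\<^sup>2) * cnj (inverse w) = w"
      using \<open>w \<noteq> 0\<close> by (simp add: field_simps)
    then have "poly H (inverse w) = cnj (poly F w)"
      unfolding H_def poly_F by (simp add: poly_pcompose mult.commute)
    moreover have "poly F w * cnj (poly F w) = of_real (r\<^sup>2)"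
    proof -
      have "c + w \<in> sphere c r" using w by (simp add: dist_norm)
      then have "poly p (c + w) \<in> sphere c r" using inv by blast
      then have "norm (poly F w) = r"
        unfolding poly_F by (simp add: dist_norm norm_minus_commute)
      then show ?thesis by (simp flip: complex_norm_square)
    qed
    ultimately show ?thesis
      using \<open>w \<noteq> 0\<close> by (simp add: poly_reflect_poly_nz)
  qed
  have "F * reflect_poly H = monom (of_real (r\<^sup>2)) (degree H)"
    using infinite_sphere_complex[OF r, of 0]
    by (rule poly_eq_if_eq_on_infinite) (simp only: F_reflect_H poly_monom)
  then have "F \<noteq> 0" and "poly F w = 0 \<Longrightarrow> w = 0" for w
    using r by (auto simp: monom_eq_0_iff poly_monom dest: arg_cong[where f = "\<lambda>q. poly q w"])
  then obtain \<mu> k where "\<mu> \<noteq> 0" "F = monom \<mu> k"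
    by (rule poly_eq_monom_if_roots_zero) blast
  then have "p = [:c:] + smult \<mu> ([:-c, 1:] ^ k)"
    using poly_F[of "_ - c"] by (intro poly_ext) (simp add: poly_monom poly_power)
  with \<open>\<mu> \<noteq> 0\<close> show thesis by (rule that)
qed

section \<open>Hausdorff limits\<close>

lemma infdist_le_hausdorff_dist_left:
  assumes "compact Z" "z \<in> Z"
  shows "infdist z A \<le> hausdorff_dist Z A"
proof -
  have "bounded ((\<lambda>y. infdist y A) ` Z)"
    by (intro compact_imp_bounded compact_continuous_image continuous_on_infdist
        continuous_on_id assms(1))
  then have "infdist z A \<le> (SUP y\<in>Z. infdist y A)"
    using assms(2) by (intro cSUP_upper bounded_imp_bdd_above)
  then show ?thesis unfolding hausdorff_dist_def by simp
qed

lemma infdist_le_hausdorff_dist_right: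
  assumes "compact A" "a \<in> A"
  shows "infdist a Z \<le> hausdorff_dist Z A"
proof -
  have "bounded ((\<lambda>y. infdist y Z) ` A)"
    by (intro compact_imp_bounded compact_continuous_image continuous_on_infdist
        continuous_on_id assms(1))
  then have "infdist a Z \<le> (SUP y\<in>A. infdist y Z)"
    using assms(2) by (intro cSUP_upper bounded_imp_bdd_above)
  then show ?thesis unfolding hausdorff_dist_def by simp
qed

lemma hausdorff_limit_approximable:
  assumes conv: "hausdorff_converges Z A" and "a \<in> A"
  obtains zs where "\<forall>\<^sub>F m in sequentially. zs m \<in> Z m" and "zs \<longlonglongrightarrow> a"
proof -
  define zs where "zs m = (SOME z. z \<in> Z m \<and> dist a z = infdist a (Z m))" for m
  have "compact A" and lim: "(\<lambda>m. hausdorff_dist (Z m) A) \<longlonglongrightarrow> 0"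
    and ev: "\<forall>\<^sub>F m in sequentially. Z m \<noteq> {} \<and> compact (Z m)"
    using conv unfolding hausdorff_converges_def by auto
  have nearest: "zs m \<in> Z m \<and> dist a (zs m) = infdist a (Z m)"
    if Zm: "Z m \<noteq> {} \<and> compact (Z m)" for m
  proof -
    obtain z where "z \<in> Z m" "infdist a (Z m) = dist a z"
      using infdist_attains_inf[of "Z m" a] compact_imp_closed Zm by blast
    then have "z \<in> Z m \<and> dist a z = infdist a (Z m)" by simp
    then show ?thesis unfolding zs_def by (rule someI)
  qed
  have "\<forall>\<^sub>F m in sequentially. dist (zs m) a \<le> hausdorff_dist (Z m) A"
    using ev
  proof (rule eventually_mono)
    fix m assume "Z m \<noteq> {} \<and> compact (Z m)"
    then have "dist (zs m) a = infdist a (Z m)"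
      using nearest by (simp add: dist_commute)
    also have "\<dots> \<le> hausdorff_dist (Z m) A"
      by (rule infdist_le_hausdorff_dist_right[OF \<open>compact A\<close> \<open>a \<in> A\<close>])
    finally show "dist (zs m) a \<le> hausdorff_dist (Z m) A" .
  qed
  with tendsto_sandwich[OF _ _ tendsto_const lim] have "(\<lambda>m. dist (zs m) a) \<longlonglongrightarrow> 0"
    by simp
  then have "zs \<longlonglongrightarrow> a"
    using tendsto_dist_iff by blast
  moreover have "\<forall>\<^sub>F m in sequentially. zs m \<in> Z m"
    using ev by (rule eventually_mono) (use nearest in blast)
  ultimately show thesis using that by blast
qed

lemma hausdorff_limit_contains_limits:
  assumes conv: "hausdorff_converges Z A"
    and in_Z: "\<forall>\<^sub>F m in sequentially. zs m \<in> Z m" and "zs \<longlonglongrightarrow> b"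
  shows "b \<in> A"
proof -
  have "A \<noteq> {}" "compact A" and lim: "(\<lambda>m. hausdorff_dist (Z m) A) \<longlonglongrightarrow> 0"
    and ev: "\<forall>\<^sub>F m in sequentially. Z m \<noteq> {} \<and> compact (Z m)"
    using conv unfolding hausdorff_converges_def by auto
  have "\<forall>\<^sub>F m in sequentially. infdist (zs m) A \<le> hausdorff_dist (Z m) A"
    using eventually_conj[OF ev in_Z]
    by (rule eventually_mono) (simp add: infdist_le_hausdorff_dist_left)
  with tendsto_sandwich[OF _ _ tendsto_const lim] have "(\<lambda>m. infdist (zs m) A) \<longlonglongrightarrow> 0"
    by (simp add: infdist_nonneg)
  moreover have "(\<lambda>m. infdist (zs m) A) \<longlonglongrightarrow> infdist b A"
    using \<open>zs \<longlonglongrightarrow> b\<close> by (intro tendsto_infdist tendsto_const)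
  ultimately have "infdist b A = 0"
    by (rule LIMSEQ_unique[rotated])
  then show ?thesis
    using in_closed_iff_infdist_zero[OF compact_imp_closed[OF \<open>compact A\<close>] \<open>A \<noteq> {}\<close>] by simp
qed

lemma hausdorff_limit_forward_invariant:
  assumes conv: "hausdorff_converges Z A" and cont: "continuous_on UNIV f"
    and preimage: "\<And>m z. z \<in> Z (Suc m) \<Longrightarrow> f z \<in> Z m"
  shows "f ` A \<subseteq> A"
proof (rule image_subsetI)
  fix a assume "a \<in> A"
  then obtain zs where "\<forall>\<^sub>F m in sequentially. zs m \<in> Z m" and "zs \<longlonglongrightarrow> a"
    using hausdorff_limit_approximable[OF conv] by blast
  then obtain N where "\<forall>m\<ge>N. zs m \<in> Z m"
    unfolding eventually_sequentially by blast
  then have "\<forall>m\<ge>N. f (zs (Suc m)) \<in> Z m"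
    using preimage le_SucI by blast
  then have "\<forall>\<^sub>F m in sequentially. f (zs (Suc m)) \<in> Z m"
    unfolding eventually_sequentially by blast
  moreover have "(\<lambda>m. f (zs (Suc m))) \<longlonglongrightarrow> f a"
    using continuous_on_tendsto_compose[OF cont LIMSEQ_Suc[OF \<open>zs \<longlonglongrightarrow> a\<close>]] by simp
  ultimately show "f a \<in> A"
    by (rule hausdorff_limit_contains_limits[OF conv])
qed

lemma hausdorff_limit_subset_closed:
  assumes conv: "hausdorff_converges Z A" and "closed S" and "\<And>m. Z m \<subseteq> S"
  shows "A \<subseteq> S"
proof
  fix a assume "a \<in> A"
  then obtain zs where in_Z: "\<forall>\<^sub>F m in sequentially. zs m \<in> Z m" and "zs \<longlonglongrightarrow> a"
    using hausdorff_limit_approximable[OF conv] by blast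
  have "\<forall>\<^sub>F m in sequentially. zs m \<in> S"
    using in_Z by (rule eventually_mono) (use assms(3) in blast)
  with \<open>closed S\<close> \<open>zs \<longlonglongrightarrow> a\<close> show "a \<in> S"
    by (intro Lim_in_closed_set) auto
qed

lemma card_ge_2_if_not_independent:
  assumes "finite V" and "\<And>x. \<not> E x x" and "\<not> independent_set E V"
  shows "card V \<ge> 2"
proof -
  obtain u v where "u \<in> V" "v \<in> V" "E u v"
    using assms(3) unfolding independent_set_def by blast
  moreover from \<open>E u v\<close> have "u \<noteq> v" using assms(2) by blast
  ultimately show ?thesis
    using assms(1) card_mono[of V "{u, v}"] by auto
qed

lemma nonempty_indep_poly_eq_shifted_monom:
  assumes "finite V" and irrefl: "\<And>x. \<not> E x x" and "\<not> independent_set E V"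
    and "\<mu> \<noteq> 0" and P: "nonempty_indep_poly V E = [:c:] + smult \<mu> ([:-c, 1:] ^ k)"
  shows "c = 0 \<and> k = 1 \<and> \<mu> = of_nat (card V)"
proof -
  let ?P = "nonempty_indep_poly V E" and ?n = "card V"
  have n2: "?n \<ge> 2"
    by (rule card_ge_2_if_not_independent[OF assms(1-3)])
  have coeff_1: "coeff ?P 1 = of_nat ?n"
    by (rule coeff_nonempty_indep_poly_1[OF assms(1) irrefl])
  have coeff_P:
    "coeff ?P j = (if j = 0 then c else 0) + \<mu> * (of_nat (k choose j) * (-c) ^ (k - j))"
    if "j \<le> k" for j
    using that by (simp add: P coeff_linear_poly_power coeff_pCons split: nat.split)
  have "k \<noteq> 0"
  proof
    assume "k = 0"
    then have "coeff ?P 1 = 0" by (simp add: P)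
    with n2 coeff_1 show False by simp
  qed
  have "k < ?n"
  proof (rule ccontr)
    assume "\<not> k < ?n"
    then have "coeff ?P k = 0" by (intro coeff_nonempty_indep_poly_eq_0 assms(1,3)) simp
    with \<open>k \<noteq> 0\<close> \<open>\<mu> \<noteq> 0\<close> show False by (simp add: coeff_P)
  qed
  have c0: "c + \<mu> * (-c) ^ k = 0"
    using coeff_P[of 0] coeff_nonempty_indep_poly_0[OF assms(1)] by simp
  have c1: "\<mu> * (of_nat k * (-c) ^ (k - 1)) = of_nat ?n"
    using coeff_P[of 1] \<open>k \<noteq> 0\<close> coeff_1 by simp
  have "c = 0"
  proof (rule ccontr)
    assume "c \<noteq> 0"
    have "(-c) ^ k = (-c) ^ (k - 1) * (-c)"
      using power_minus_mult[of k "-c"] \<open>k \<noteq> 0\<close> by simp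
    with c0 \<open>c \<noteq> 0\<close> have unit: "\<mu> * (-c) ^ (k - 1) = 1" by (simp add: algebra_simps)
    have "(of_nat ?n :: complex) = of_nat k * (\<mu> * (-c) ^ (k - 1))"
      using c1 by (simp add: algebra_simps)
    also have "\<dots> = of_nat k" unfolding unit by simp
    finally show False using \<open>k < ?n\<close> by simp
  qed
  with c1 n2 \<open>k \<noteq> 0\<close> have "k = 1" by (cases "k - 1") auto
  with c1 \<open>c = 0\<close> show ?thesis by simp
qed

lemma nonempty_indep_poly_not_sphere_invariant:
  assumes "finite V" and "\<And>x. \<not> E x x" and "\<not> independent_set E V" and "r > 0"
  shows "\<not> poly (nonempty_indep_poly V E) ` sphere c r \<subseteq> sphere c r"
proof
  let ?P = "nonempty_indep_poly V E" and ?n = "card V"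
  assume inv: "poly ?P ` sphere c r \<subseteq> sphere c r"
  obtain \<mu> k where "\<mu> \<noteq> 0" and "?P = [:c:] + smult \<mu> ([:-c, 1:] ^ k)"
    by (rule poly_sphere_invariant_eq[OF \<open>r > 0\<close> inv])
  then have "c = 0 \<and> k = 1 \<and> \<mu> = of_nat ?n"
    using nonempty_indep_poly_eq_shifted_monom[OF assms(1-3)] by blast
  with \<open>?P = [:c:] + smult \<mu> ([:-c, 1:] ^ k)\<close>
  have "c = 0" and P: "?P = smult (of_nat ?n) [:0, 1:]"
    by simp_all
  have "of_real r \<in> sphere c r"
    using \<open>r > 0\<close> \<open>c = 0\<close> by simp
  then have "poly ?P (of_real r) \<in> sphere c r"
    using inv by blast
  then have "real ?n * r = r"
    using \<open>c = 0\<close> \<open>r > 0\<close> by (simp add: P norm_mult)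
  with \<open>r > 0\<close> card_ge_2_if_not_independent[OF assms(1-3)] show False
    by simp
qed

lemma poly_nonempty_indep_poly_independent:
  assumes "finite V" and "independent_set E V"
  shows "poly (nonempty_indep_poly V E) z = (z + 1) ^ card V - 1"
proof -
  have "indep_sets V E = Pow V"
    using assms(2) unfolding indep_sets_def independent_set_def by blast
  then have "indep_poly V E z = (\<Sum>X\<in>Pow V. (\<Prod>x\<in>X. z) * (\<Prod>x\<in>V - X. 1))"
    by (simp add: indep_poly_altdef)
  also have "\<dots> = (z + 1) ^ card V"
    using prod_add[OF assms(1), of "\<lambda>_. z" "\<lambda>_. 1"] by simp
  finally show ?thesis
    using indep_poly_eq_1_plus[OF assms(1)] by (simp add: algebra_simps)
qed

lemma lex_power_zeros_independent:
  assumes "finite V" and "independent_set E V"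
  shows "lex_power_zeros V E m \<subseteq> {-1}"
proof -
  let ?P = "poly (nonempty_indep_poly V E)"
  have P_eq: "?P z = -1 \<Longrightarrow> z = -1" for z
    by (simp add: poly_nonempty_indep_poly_independent[OF assms] add_eq_0_iff2)
  have "(?P ^^ m) z = -1 \<Longrightarrow> z = -1" for z
    by (induction m arbitrary: z) (auto dest: P_eq)
  then show ?thesis
    by (auto simp: lex_power_zeros_eq[OF assms(1)])
qed

theorem theoremA:
  fixes V :: "'a set" and E :: "'a \<Rightarrow> 'a \<Rightarrow> bool" and A :: "complex set"
  assumes "finite_simple_graph V E"
    and "hausdorff_converges (lex_power_zeros V E) A"
  shows "\<not> is_circle A"
proof
  assume "is_circle A"
  then obtain c r where "r > 0" and A: "A = sphere c r"
    unfolding is_circle_def by blast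
  have "finite V" and irrefl: "\<And>x. \<not> E x x"
    using assms(1) unfolding finite_simple_graph_def by auto
  show False
  proof (cases "independent_set E V")
    case False
    let ?P = "poly (nonempty_indep_poly V E)"
    have "?P ` A \<subseteq> A"
      by (rule hausdorff_limit_forward_invariant[OF assms(2)])
        (auto intro: continuous_intros poly_nonempty_indep_poly_mem_lex_power_zeros[OF \<open>finite V\<close>])
    with nonempty_indep_poly_not_sphere_invariant[OF \<open>finite V\<close> irrefl False \<open>r > 0\<close>]
    show False by (simp add: A)
  next
    case True
    have "A \<subseteq> {-1}"
      by (rule hausdorff_limit_subset_closed[OF assms(2) _ lex_power_zeros_independent])
        (simp_all add: \<open>finite V\<close> True)
    moreover obtain u v where "u \<in> A" "v \<in> A" "u \<noteq> v"
      using two_points_on_sphere[OF \<open>r > 0\<close>] unfolding A .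
    ultimately show False by blast
  qed
qed

end
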